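(* Let $f:\mathbb{R}^d\to\mathbb{R}$ be differentiable with minimum value $f^\ast$; let $L>0,\mu>0,\rho\ge1$. Assume (L-smooth) $f(x)-f(y)-\langle\nabla f(y),x-y\rangle\le\frac{L}{2}\|x-y\|^2$ for all $x,y$; (PL) $\|\nabla f(x)\|^2\ge2\mu(f(x)-f^\ast)$ for all $x$; (SGC) $\mathbb{E}_\xi[\nabla f(x,\xi)]=\nabla f(x)$ and $\mathbb{E}_\xi[\|\nabla f(x,\xi)\|^2]\le\rho\|\nabla f(x)\|^2$ for all $x$. Let $(x_t,z_t)_{t\ge0}$ be the continuized Nesterov process (see context) with $0<\gamma\le\frac{1}{\rho L}$, $\gamma'=\gamma+\sqrt{\frac{\gamma}{2\rho}}$, $\eta=\sqrt{\frac{\gamma}{2\rho}}$, $\eta'=\frac{\mu\gamma}{2}-\sqrt{\frac{\gamma}{2\rho}}$. Then for all $t\ge0$, $$\mathbb{E}[f(x_t)-f^\ast]\le e^{-\frac{\mu\gamma}{2}t}(f(x_0)-f^\ast).$$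
   Context: Stochastic gradients: $(\Xi,\mathcal{P})$ is a probability space and $\nabla f(x,\xi)$ is a measurable stochastic estimate of $\nabla f(x)$; $\mathbb{E}_\xi$ denotes integration in $\xi\sim\mathcal{P}$. Continuized Nesterov process with constant parameters $(\eta,\eta',\gamma,\gamma')$: let $T_0=0$, $T_{k+1}-T_k$ ($k\ge0$) i.i.d. exponential with parameter $1$, and $\xi_1,\xi_2,\dots$ i.i.d. with law $\mathcal{P}$, independent of the $T_k$; $N=\sum_{k\ge1}\delta_{(T_k,\xi_k)}$ is a Poisson point measure with intensity $dt\otimes\mathcal{P}$. The càdlàg process $(x_t,z_t)$ starts at $x_0=z_0$ deterministic and solves $dx_t=\eta(z_t-x_t)dt-\gamma\int_\Xi\nabla f(x_{t^-},\xi)\,dN(t,\xi)$, $dz_t=\eta'(x_t-z_t)dt-\gamma'\int_\Xi\nabla f(x_{t^-},\xi)\,dN(t,\xi)$; i.e. between jump times $\dot x=\eta(z-x)$, $\dot z=\eta'(x-z)$, and at each $T_k$ ($k\ge1$) $x_{T_k}=x_{T_k^-}-\gamma\nabla f(x_{T_k^-},\xi_k)$, $z_{T_k}=z_{T_k^-}-\gamma'\nabla f(x_{T_k^-},\xi_k)$. *)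

theory Defs
  imports "HOL-Probability.Probability"
begin

text \<open>Flow of the linear ODE  x' = eta (z - x),  z' = eta' (x - z)  over a time span tau,
  started at (x, z). Closed form (valid when eta + eta' \<noteq> 0):
  eta' x + eta z is conserved and x - z decays like exp(-(eta+eta') tau).\<close>
definition cn_flow :: "real \<Rightarrow> real \<Rightarrow> 'a::real_vector \<times> 'a \<Rightarrow> real \<Rightarrow> 'a \<times> 'a" where
  "cn_flow eta eta' p tau =
     (let s = eta + eta'; x = fst p; z = snd p;
          c = (1 / s) *\<^sub>R (eta' *\<^sub>R x + eta *\<^sub>R z);
          w = exp (- s * tau) *\<^sub>R (x - z)
      in (c + (eta / s) *\<^sub>R w, c - (eta' / s) *\<^sub>R w))"

lemma cn_flow_0:
  assumes "eta + eta' \<noteq> 0"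
  shows "cn_flow eta eta' p 0 = p"
proof -
  obtain x z where p: "p = (x, z)" by (cases p)
  have "(1 / (eta + eta')) *\<^sub>R (eta' *\<^sub>R x + eta *\<^sub>R z) + (eta / (eta + eta')) *\<^sub>R (x - z)
        = (1 / (eta + eta')) *\<^sub>R ((eta + eta') *\<^sub>R x)"
    by (simp add: algebra_simps divide_inverse scaleR_add_right scaleR_diff_right)
  moreover have "(1 / (eta + eta')) *\<^sub>R (eta' *\<^sub>R x + eta *\<^sub>R z) - (eta' / (eta + eta')) *\<^sub>R (x - z)
        = (1 / (eta + eta')) *\<^sub>R ((eta + eta') *\<^sub>R z)"
    by (simp add: algebra_simps divide_inverse scaleR_add_right scaleR_diff_right)
  ultimately show ?thesis using assms by (simp add: cn_flow_def p Let_def)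
qed


lemma cn_flow_ode:
  fixes x z :: "'a::real_normed_vector"
  assumes s: "eta + eta' \<noteq> 0"
  shows "((\<lambda>tau. cn_flow eta eta' (x, z) tau) has_vector_derivative
          (eta *\<^sub>R (snd (cn_flow eta eta' (x, z) tau) - fst (cn_flow eta eta' (x, z) tau)),
           eta' *\<^sub>R (fst (cn_flow eta eta' (x, z) tau) - snd (cn_flow eta eta' (x, z) tau)))) (at tau)"
proof -
  define s where "s = eta + eta'"
  have d: "((\<lambda>tau. exp (- s * tau)) has_real_derivative (- s * exp (- s * tau))) (at tau)"
    by (auto intro!: derivative_eq_intros)
  have dw: "((\<lambda>tau. exp (- s * tau) *\<^sub>R (x - z)) has_vector_derivative
              (- s * exp (- s * tau)) *\<^sub>R (x - z)) (at tau)"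
    using d by (auto intro!: derivative_eq_intros simp: has_real_derivative_iff_has_vector_derivative)
  have D: "((\<lambda>tau. cn_flow eta eta' (x, z) tau) has_vector_derivative
          ((eta / s) *\<^sub>R ((- s * exp (- s * tau)) *\<^sub>R (x - z)),
           - ((eta' / s) *\<^sub>R ((- s * exp (- s * tau)) *\<^sub>R (x - z))))) (at tau)"
    unfolding cn_flow_def Let_def fst_conv snd_conv s_def[symmetric]
    by (intro has_vector_derivative_Pair derivative_eq_intros dw) auto
  have diff: "snd (cn_flow eta eta' (x, z) tau) - fst (cn_flow eta eta' (x, z) tau)
      = - ((eta / s + eta' / s) *\<^sub>R (exp (- s * tau) *\<^sub>R (x - z)))"
    by (simp add: cn_flow_def Let_def s_def[symmetric] algebra_simps)
  have one: "eta / s + eta' / s = 1" using s by (simp add: s_def add_divide_distrib[symmetric])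
  have diff': "snd (cn_flow eta eta' (x, z) tau) - fst (cn_flow eta eta' (x, z) tau)
      = - (exp (- s * tau) *\<^sub>R (x - z))"
    using diff one by simp
  moreover have "(eta / s) *\<^sub>R ((- s * exp (- s * tau)) *\<^sub>R (x - z))
      = eta *\<^sub>R (- (exp (- s * tau) *\<^sub>R (x - z)))"
  proof -
    have k: "(eta / s) * (- s * exp (- s * tau)) = - (eta * exp (- s * tau))"
      using s by (simp add: s_def field_simps)
    show ?thesis by (simp only: scaleR_scaleR k) simp
  qed
  moreover have "- ((eta' / s) *\<^sub>R ((- s * exp (- s * tau)) *\<^sub>R (x - z)))
      = eta' *\<^sub>R (exp (- s * tau) *\<^sub>R (x - z))"
  proof -
    have k: "(eta' / s) * (- s * exp (- s * tau)) = - (eta' * exp (- s * tau))"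
      using s by (simp add: s_def field_simps)
    show ?thesis by (simp only: scaleR_scaleR k) simp
  qed
  ultimately have F: "fst (cn_flow eta eta' (x, z) tau) - snd (cn_flow eta eta' (x, z) tau)
      = exp (- s * tau) *\<^sub>R (x - z)"
    and e1: "(eta / s) *\<^sub>R ((- s * exp (- s * tau)) *\<^sub>R (x - z))
      = eta *\<^sub>R (snd (cn_flow eta eta' (x, z) tau) - fst (cn_flow eta eta' (x, z) tau))"
    and e2: "- ((eta' / s) *\<^sub>R ((- s * exp (- s * tau)) *\<^sub>R (x - z)))
      = eta' *\<^sub>R (exp (- s * tau) *\<^sub>R (x - z))"
    by (metis minus_diff_eq minus_minus)+
  show ?thesis unfolding F using D unfolding e1 e2 .
qed

text \<open>State (x_{T_k}, z_{T_k}) right after the k-th jump. E i = T_{i+1} - T_i is the i-th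
  inter-arrival time and xi i is the mark of the (i+1)-th jump (the paper's xi_{i+1}).
  G is the stochastic gradient.\<close>
fun cn_state :: "real \<Rightarrow> real \<Rightarrow> real \<Rightarrow> real \<Rightarrow> ('a::real_vector \<Rightarrow> 'b \<Rightarrow> 'a) \<Rightarrow> 'a
                   \<Rightarrow> (nat \<Rightarrow> real) \<Rightarrow> (nat \<Rightarrow> 'b) \<Rightarrow> nat \<Rightarrow> 'a \<times> 'a" where
  "cn_state eta eta' gamma gamma' G x0 E xi 0 = (x0, x0)"
| "cn_state eta eta' gamma gamma' G x0 E xi (Suc k) =
     (let p = cn_flow eta eta' (cn_state eta eta' gamma gamma' G x0 E xi k) (E k);
          g = G (fst p) (xi k)
      in (fst p - gamma *\<^sub>R g, snd p - gamma' *\<^sub>R g))"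

definition cn_time :: "(nat \<Rightarrow> real) \<Rightarrow> nat \<Rightarrow> real" where
  "cn_time E k = (\<Sum>i<k. E i)"

text \<open>The cadlag process (x_t, z_t): at time t, with k the index such that
  T_k \<le> t < T_{k+1}, follow the flow for time t - T_k from the state after the k-th jump.\<close>
definition cn_process :: "real \<Rightarrow> real \<Rightarrow> real \<Rightarrow> real \<Rightarrow> ('a::real_vector \<Rightarrow> 'b \<Rightarrow> 'a) \<Rightarrow> 'a
                   \<Rightarrow> (nat \<Rightarrow> real) \<Rightarrow> (nat \<Rightarrow> 'b) \<Rightarrow> real \<Rightarrow> 'a \<times> 'a" where
  "cn_process eta eta' gamma gamma' G x0 E xi t =
     (let k = (LEAST k. t < cn_time E (Suc k))
      in cn_flow eta eta' (cn_state eta eta' gamma gamma' G x0 E xi k) (t - cn_time E k))"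

end

(* Between the jumps of a rate-one Poisson clock the process follows a linear flow.
   For V(x, z) = f x - f* + |x - z|^2 / 2, smoothness and the strong growth condition bound
   the expected value of V after a jump, and together with the drift of V along the flow
   and the PL inequality this makes the generator of the process at most -(mu gamma / 2) V.
   Conditioning on the first jump turns this into a one-jump inequality; iterating it over
   the jumps, by Fubini over the i.i.d. inter-jump times and marks, bounds E V(x_t, z_t)
   by exp (-(mu gamma / 2) t) V(x_0, z_0). The same iteration for the constant function,
   with every jump weighted by 2, gives P(T_n <= t) <= exp t / 2^n: almost surely only
   finitely many jumps occur before t, so the iteration accounts for the whole expectation. *)

theory Submission
  imports Defs
begin

section \<open>Integrals against an exponential clock\<close>

lemma nn_integral_exponential_density_greaterThan:
  assumes "0 \<le> tau"
  shows "(\<integral>\<^sup>+ s. ennreal (exponential_density 1 s) * indicator {tau<..} s \<partial>lborel) = ennreal (exp (- tau))"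
proof -
  let ?D = "density lborel (exponential_density 1)"
  interpret D: prob_space ?D
    by (rule prob_space_exponential_density) simp
  have "{tau<..} = space ?D - {..tau}" by auto
  then have "measure ?D {tau<..} = 1 - measure ?D {..tau}"
    using D.prob_compl[of "{..tau}"] by simp
  also have "measure ?D {..tau} = 1 - exp (- tau)"
    using emeasure_erlang_density[of 1 0 tau] assms
    by (simp add: D.emeasure_eq_measure erlang_CDF_def)
  finally have "emeasure ?D {tau<..} = ennreal (exp (- tau))"
    by (simp add: D.emeasure_eq_measure)
  then show ?thesis
    by (simp add: emeasure_density)
qed

text \<open>No measurability of \<open>g\<close> is needed: the bound goes through a Borel version of \<open>B\<close>.\<close>
lemma nn_integral_le_plus_has_integral:
  fixes B :: "real \<Rightarrow> real" and g h :: "real \<Rightarrow> ennreal"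
  assumes B: "(B has_integral I) {a..b}" and B_nonneg: "\<And>s. s \<in> {a..b} \<Longrightarrow> 0 \<le> B s"
    and [measurable]: "h \<in> borel_measurable lborel"
    and g_le: "\<And>s. g s \<le> h s + indicator {a..b} s * ennreal (B s)"
  shows "(\<integral>\<^sup>+ s. g s \<partial>lborel) \<le> (\<integral>\<^sup>+ s. h s \<partial>lborel) + ennreal I"
proof -
  have "(\<lambda>s. indicator {a..b} s *\<^sub>R B s) \<in> lebesgue \<rightarrow>\<^sub>M borel"
    by (rule has_integral_implies_lebesgue_measurable[OF B])
  then obtain B' :: "real \<Rightarrow> real" where [measurable]: "B' \<in> borel \<rightarrow>\<^sub>M borel"
    and B': "AE s in lborel. indicator {a..b} s *\<^sub>R B s = B' s"
    by (auto dest: completion_ex_borel_measurable_real)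
  have "AE s in lborel. indicator {a..b} s * ennreal (B s) = ennreal (B' s)"
    using B' by eventually_elim (auto simp: indicator_def)
  then have "(\<integral>\<^sup>+ s. g s \<partial>lborel) \<le> (\<integral>\<^sup>+ s. h s + ennreal (B' s) \<partial>lborel)"
    by (intro nn_integral_mono_AE) (auto elim!: eventually_mono intro: order_trans[OF g_le])
  also have "\<dots> = (\<integral>\<^sup>+ s. h s \<partial>lborel) + (\<integral>\<^sup>+ s. indicator {a..b} s * B s \<partial>lborel)"
    using B' by (subst nn_integral_add) (auto intro!: nn_integral_cong_AE)
  also have "(\<integral>\<^sup>+ s. indicator {a..b} s * B s \<partial>lborel) = ennreal I"
    by (rule nn_integral_has_integral_lebesgue[OF B_nonneg B])
  finally show ?thesis .
qed

lemma nn_integral_exponential_clock_le: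
  fixes phi phi' J :: "real \<Rightarrow> real" and c tau :: real
  assumes tau: "0 \<le> tau"
    and deriv: "\<And>s. s \<in> {0..tau} \<Longrightarrow> (phi has_real_derivative phi' s) (at s within {0..tau})"
    and J: "\<And>s. s \<in> {0..tau} \<Longrightarrow> 0 \<le> J s \<and> J s \<le> (1 - c) * phi s - phi' s"
    and phi_tau: "0 \<le> phi tau"
  shows "(\<integral>\<^sup>+ s. ennreal (exponential_density 1 s) * (indicator {tau<..} s * ennreal (phi tau)
            + indicator {0..tau} s * ennreal (exp (- c * (tau - s)) * J s)) \<partial>lborel)
         \<le> ennreal (exp (- c * tau) * phi 0)"
proof -
  \<comment> \<open>Integrating factor: the derivative of \<open>exp ((c - 1) s) phi s\<close> is at most \<open>- exp ((c - 1) s) J s\<close>.\<close>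
  define F where "F s = exp ((c - 1) * s) * phi s" for s
  define B where "B s = exp (- c * tau) * - (exp ((c - 1) * s) * ((c - 1) * phi s + phi' s))" for s
  have "((\<lambda>s. exp ((c - 1) * s) * ((c - 1) * phi s + phi' s)) has_integral F tau - F 0) {0..tau}"
  proof (rule fundamental_theorem_of_calculus[OF tau])
    fix s assume "s \<in> {0..tau}"
    then show "(F has_vector_derivative exp ((c - 1) * s) * ((c - 1) * phi s + phi' s)) (at s within {0..tau})"
      unfolding F_def has_real_derivative_iff_has_vector_derivative[symmetric]
      using deriv by (auto intro!: derivative_eq_intros simp: algebra_simps)
  qed
  then have "((\<lambda>s. exp (- c * tau) * - (exp ((c - 1) * s) * ((c - 1) * phi s + phi' s)))
      has_integral exp (- c * tau) * - (F tau - F 0)) {0..tau}"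
    by (intro has_integral_mult_right has_integral_neg)
  then have B_integral: "(B has_integral exp (- c * tau) * (F 0 - F tau)) {0..tau}"
    by (simp only: B_def[abs_def] minus_diff_eq)
  have B_ge: "exp (- s) * (exp (- c * (tau - s)) * J s) \<le> B s" if "s \<in> {0..tau}" for s
  proof -
    have "exp (- s) * exp (- c * (tau - s)) = exp (- c * tau) * exp ((c - 1) * s)"
      by (simp add: exp_add[symmetric] algebra_simps)
    moreover have "exp (- c * tau) * exp ((c - 1) * s) * J s
        \<le> exp (- c * tau) * exp ((c - 1) * s) * (- ((c - 1) * phi s + phi' s))"
      using J[OF that] by (intro mult_left_mono) (auto simp: algebra_simps)
    ultimately show ?thesis by (simp add: B_def algebra_simps)
  qed
  have B_nonneg: "0 \<le> B s" if "s \<in> {0..tau}" for s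
    using B_ge[OF that] J[OF that] by (meson exp_ge_zero mult_nonneg_nonneg order_trans)
  have "(\<integral>\<^sup>+ s. ennreal (exponential_density 1 s) * (indicator {tau<..} s * ennreal (phi tau)
            + indicator {0..tau} s * ennreal (exp (- c * (tau - s)) * J s)) \<partial>lborel)
      \<le> (\<integral>\<^sup>+ s. ennreal (exponential_density 1 s) * indicator {tau<..} s * ennreal (phi tau) \<partial>lborel)
        + ennreal (exp (- c * tau) * (F 0 - F tau))"
  proof (rule nn_integral_le_plus_has_integral[OF B_integral B_nonneg])
    fix s
    show "ennreal (exponential_density 1 s) * (indicator {tau<..} s * ennreal (phi tau)
            + indicator {0..tau} s * ennreal (exp (- c * (tau - s)) * J s))
        \<le> ennreal (exponential_density 1 s) * indicator {tau<..} s * ennreal (phi tau)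
          + indicator {0..tau} s * ennreal (B s)"
    proof (cases "s \<in> {0..tau}")
      case True
      then have "ennreal (exponential_density 1 s) * ennreal (exp (- c * (tau - s)) * J s)
          = ennreal (exp (- s) * (exp (- c * (tau - s)) * J s))"
        using J by (simp add: exponential_density_def ennreal_mult')
      also have "\<dots> \<le> ennreal (B s)"
        using B_ge[OF True] by (rule ennreal_leI)
      finally show ?thesis
        using True by (simp add: distrib_left)
    qed (auto simp: indicator_def)
  qed measurable
  also have "\<dots> = ennreal (exp (- tau) * phi tau + exp (- c * tau) * (F 0 - F tau))"
    using nn_integral_exponential_density_greaterThan[OF tau] has_integral_nonneg[OF B_integral] B_nonneg phi_tau
    by (simp add: nn_integral_multc ennreal_mult' ennreal_plus)
  also have "exp (- tau) * phi tau + exp (- c * tau) * (F 0 - F tau) = exp (- c * tau) * phi 0"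
    by (simp add: F_def algebra_simps exp_add[symmetric])
  finally show ?thesis .
qed

section \<open>The continuized process\<close>

lemma cn_state_cong:
  assumes "\<And>i. i < n \<Longrightarrow> E i = E' i" "\<And>i. i < n \<Longrightarrow> xi i = xi' i"
  shows "cn_state eta eta' gamma gamma' G x0 E xi n = cn_state eta eta' gamma gamma' G x0 E' xi' n"
  using assms by (induction n) (auto simp: Let_def)

definition jump_time :: "nat \<Rightarrow> (nat \<Rightarrow> real \<times> 'b) \<Rightarrow> real" where
  "jump_time n y = cn_time (\<lambda>i. fst (y i)) n"

text \<open>Requiring each of the first \<open>n\<close> jumps, not just the \<open>n\<close>-th, to happen by time \<open>t\<close> matters
  because inter-jump times are nonnegative only almost surely.\<close>
definition jumps_by :: "real \<Rightarrow> nat \<Rightarrow> (nat \<Rightarrow> real \<times> 'b) \<Rightarrow> bool" where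
  "jumps_by t n y \<longleftrightarrow> (\<forall>i<n. jump_time (Suc i) y \<le> t)"

lemma jump_time_0 [simp]: "jump_time 0 y = 0"
  by (simp add: jump_time_def cn_time_def)

lemma jump_time_Suc: "jump_time (Suc n) y = jump_time n y + fst (y n)"
  by (simp add: jump_time_def cn_time_def)

lemma jump_time_cong: "(\<And>i. i < n \<Longrightarrow> y i = y' i) \<Longrightarrow> jump_time n y = jump_time n y'"
  unfolding jump_time_def cn_time_def by (intro sum.cong) auto

lemma jumps_by_0 [simp]: "jumps_by t 0 y"
  by (simp add: jumps_by_def)

lemma jumps_by_Suc: "jumps_by t (Suc n) y \<longleftrightarrow> jumps_by t n y \<and> jump_time (Suc n) y \<le> t"
  by (auto simp: jumps_by_def less_Suc_eq)

lemma jumps_by_cong: "(\<And>i. i < n \<Longrightarrow> y i = y' i) \<Longrightarrow> jumps_by t n y = jumps_by t n y'"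
  unfolding jumps_by_def by (metis Suc_leI jump_time_cong order_less_le_trans)

locale continuized_process = P: prob_space P
  for P :: "'b measure" +
  fixes eta eta' gamma gamma' :: real and G :: "'a::euclidean_space \<Rightarrow> 'b \<Rightarrow> 'a"
  assumes G_measurable: "(\<lambda>(x, s). G x s) \<in> borel_measurable (borel \<Otimes>\<^sub>M P)"
    and flow_rate_nonzero: "eta + eta' \<noteq> 0"
begin

definition jump :: "'a \<times> 'a \<Rightarrow> 'b \<Rightarrow> 'a \<times> 'a" where
  "jump p s = (fst p - gamma *\<^sub>R G (fst p) s, snd p - gamma' *\<^sub>R G (fst p) s)"

text \<open>The joint law of an inter-jump time \<open>T\<^bsub>k+1\<^esub> - T\<^sub>k\<close> and the mark \<open>\<xi>\<^bsub>k+1\<^esub>\<close> of the jump ending it.\<close>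
definition jump_law :: "(real \<times> 'b) measure" where
  "jump_law = density lborel (exponential_density 1) \<Otimes>\<^sub>M P"

lemma sets_jump_law: "sets jump_law = sets (borel \<Otimes>\<^sub>M P)"
  unfolding jump_law_def by (intro sets_pair_measure_cong) auto

lemma prob_space_jump_law: "prob_space jump_law"
  unfolding jump_law_def
  by (intro prob_space_pair prob_space_exponential_density P.prob_space_axioms) simp

lemma nn_integral_jump_law:
  assumes [measurable]: "h \<in> borel_measurable (borel \<Otimes>\<^sub>M P)"
  shows "(\<integral>\<^sup>+ z. h z \<partial>jump_law)
    = (\<integral>\<^sup>+ s. ennreal (exponential_density 1 s) * (\<integral>\<^sup>+ y. h (s, y) \<partial>P) \<partial>lborel)"
proof -
  have "h \<in> borel_measurable (density lborel (exponential_density 1) \<Otimes>\<^sub>M P)"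
    using sets_jump_law unfolding jump_law_def by (simp cong: measurable_cong_sets)
  then have "(\<integral>\<^sup>+ z. h z \<partial>jump_law)
      = (\<integral>\<^sup>+ s. (\<integral>\<^sup>+ y. h (s, y) \<partial>P) \<partial>density lborel (exponential_density 1))"
    unfolding jump_law_def by (rule P.nn_integral_fst[symmetric])
  also have "\<dots> = (\<integral>\<^sup>+ s. ennreal (exponential_density 1 s) * (\<integral>\<^sup>+ y. h (s, y) \<partial>P) \<partial>lborel)"
    using P.borel_measurable_nn_integral_fst[OF assms] by (intro nn_integral_density) simp_all
  finally show ?thesis .
qed

lemma measurable_G [measurable (raw)]:
  assumes "a \<in> N \<rightarrow>\<^sub>M borel" "b \<in> N \<rightarrow>\<^sub>M P"
  shows "(\<lambda>w. G (a w) (b w)) \<in> N \<rightarrow>\<^sub>M borel"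
  using measurable_compose[OF measurable_Pair[OF assms] G_measurable] by simp

lemma measurable_cn_flow [measurable (raw)]:
  fixes a :: "'n \<Rightarrow> 'a \<times> 'a"
  assumes "a \<in> N \<rightarrow>\<^sub>M borel" and [measurable]: "c \<in> N \<rightarrow>\<^sub>M borel"
  shows "(\<lambda>w. cn_flow eta eta' (a w) (c w)) \<in> N \<rightarrow>\<^sub>M borel"
proof -
  have [measurable]: "a \<in> N \<rightarrow>\<^sub>M borel \<Otimes>\<^sub>M borel"
    using assms(1) by (simp add: borel_prod)
  show ?thesis
    unfolding cn_flow_def Let_def by measurable
qed

lemma measurable_jump [measurable (raw)]:
  fixes a :: "'n \<Rightarrow> 'a \<times> 'a"
  assumes "a \<in> N \<rightarrow>\<^sub>M borel" and [measurable]: "b \<in> N \<rightarrow>\<^sub>M P"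
  shows "(\<lambda>w. jump (a w) (b w)) \<in> N \<rightarrow>\<^sub>M borel"
proof -
  have [measurable]: "a \<in> N \<rightarrow>\<^sub>M borel \<Otimes>\<^sub>M borel"
    using assms(1) by (simp add: borel_prod)
  show ?thesis
    unfolding jump_def borel_prod[symmetric] by measurable
qed

text \<open>The one-jump form of the supermartingale property of \<open>exp (c t) beta\<^bsup>N t\<^esup> W (x\<^sub>t, z\<^sub>t)\<close>,
  where \<open>N t\<close> counts the jumps up to time \<open>t\<close>.\<close>
definition first_jump_decay :: "('a \<times> 'a \<Rightarrow> real) \<Rightarrow> real \<Rightarrow> real \<Rightarrow> bool" where
  "first_jump_decay W c beta \<longleftrightarrow> (\<forall>q tau. 0 \<le> tau \<longrightarrow>
     (\<integral>\<^sup>+ z. ennreal (of_bool (tau < fst z) * W (cn_flow eta eta' q tau))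
            + ennreal (of_bool (fst z \<le> tau) * beta * exp (- c * (tau - fst z))
                        * W (jump (cn_flow eta eta' q (fst z)) (snd z))) \<partial>jump_law)
     \<le> ennreal (exp (- c * tau) * W q))"

lemma first_jump_decayD:
  assumes "first_jump_decay W c beta" and "0 \<le> tau"
  shows "(\<integral>\<^sup>+ z. ennreal (of_bool (tau < fst z) * W (cn_flow eta eta' q tau))
            + ennreal (of_bool (fst z \<le> tau) * beta * exp (- c * (tau - fst z))
                        * W (jump (cn_flow eta eta' q (fst z)) (snd z))) \<partial>jump_law)
     \<le> ennreal (exp (- c * tau) * W q)"
  using assms unfolding first_jump_decay_def by blast

text \<open>The hypotheses \<open>jump_le\<close> and \<open>generator_le\<close> say that the generator
  \<open>W' + beta E W(jump) - W\<close> of the process is at most \<open>- c W\<close>.\<close>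
lemma first_jump_decayI:
  fixes W W' J :: "'a \<times> 'a \<Rightarrow> real"
  assumes [measurable]: "W \<in> borel_measurable borel"
    and W_nonneg: "\<And>p. 0 \<le> W p" and beta: "0 \<le> beta" and J_nonneg: "\<And>p. 0 \<le> J p"
    and jump_le: "\<And>p. (\<integral>\<^sup>+ s. ennreal (beta * W (jump p s)) \<partial>P) \<le> ennreal (J p)"
    and flow_deriv: "\<And>q s. ((\<lambda>s. W (cn_flow eta eta' q s)) has_real_derivative W' (cn_flow eta eta' q s)) (at s)"
    and generator_le: "\<And>p. J p \<le> (1 - c) * W p - W' p"
  shows "first_jump_decay W c beta"
  unfolding first_jump_decay_def
proof (intro allI impI)
  fix q :: "'a \<times> 'a" and tau :: real
  assume tau: "0 \<le> tau"
  define F where "F s = cn_flow eta eta' q s" for s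
  have [measurable]: "F \<in> borel_measurable borel"
    unfolding F_def by measurable
  define h where "h z = ennreal (of_bool (tau < fst z) * W (F tau))
     + ennreal (of_bool (fst z \<le> tau) * beta * exp (- c * (tau - fst z)) * W (jump (F (fst z)) (snd z)))"
    for z :: "real \<times> 'b"
  have inner: "(\<integral>\<^sup>+ y. h (s, y) \<partial>P) \<le> indicator {tau<..} s * ennreal (W (F tau))
      + indicator {0..tau} s * ennreal (exp (- c * (tau - s)) * J (F s))" if "0 \<le> s" for s
  proof -
    have "(\<integral>\<^sup>+ y. h (s, y) \<partial>P) = ennreal (of_bool (tau < s) * W (F tau))
        + (\<integral>\<^sup>+ y. ennreal (of_bool (s \<le> tau) * exp (- c * (tau - s))) * ennreal (beta * W (jump (F s) y)) \<partial>P)"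
      unfolding h_def fst_conv snd_conv
      by (subst nn_integral_add) (auto simp: P.emeasure_space_1 ennreal_mult'[symmetric] mult_ac W_nonneg beta)
    also have "\<dots> = ennreal (of_bool (tau < s) * W (F tau))
        + ennreal (of_bool (s \<le> tau) * exp (- c * (tau - s))) * (\<integral>\<^sup>+ y. ennreal (beta * W (jump (F s) y)) \<partial>P)"
      by (subst nn_integral_cmult) auto
    also have "\<dots> \<le> ennreal (of_bool (tau < s) * W (F tau))
        + ennreal (of_bool (s \<le> tau) * exp (- c * (tau - s))) * ennreal (J (F s))"
      by (intro add_left_mono mult_left_mono jump_le) auto
    also have "\<dots> = indicator {tau<..} s * ennreal (W (F tau))
        + indicator {0..tau} s * ennreal (exp (- c * (tau - s)) * J (F s))"
      using that J_nonneg[of "F s"] by (auto simp: indicator_def ennreal_mult'[symmetric])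
    finally show ?thesis .
  qed
  have "(\<integral>\<^sup>+ z. h z \<partial>jump_law) = (\<integral>\<^sup>+ s. ennreal (exponential_density 1 s) * (\<integral>\<^sup>+ y. h (s, y) \<partial>P) \<partial>lborel)"
    by (rule nn_integral_jump_law) (unfold h_def, measurable)
  also have "\<dots> \<le> (\<integral>\<^sup>+ s. ennreal (exponential_density 1 s) * (indicator {tau<..} s * ennreal (W (F tau))
      + indicator {0..tau} s * ennreal (exp (- c * (tau - s)) * J (F s))) \<partial>lborel)"
  proof (rule nn_integral_mono)
    fix s :: real
    show "ennreal (exponential_density 1 s) * (\<integral>\<^sup>+ y. h (s, y) \<partial>P)
      \<le> ennreal (exponential_density 1 s) * (indicator {tau<..} s * ennreal (W (F tau))
        + indicator {0..tau} s * ennreal (exp (- c * (tau - s)) * J (F s)))"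
      using inner[of s] by (cases "0 \<le> s") (auto simp: exponential_density_def intro: mult_left_mono)
  qed
  also have "\<dots> \<le> ennreal (exp (- c * tau) * W (F 0))"
  proof (rule nn_integral_exponential_clock_le[OF tau])
    fix s assume "s \<in> {0..tau}"
    show "((\<lambda>s. W (F s)) has_real_derivative W' (F s)) (at s within {0..tau})"
      unfolding F_def by (rule has_field_derivative_at_within[OF flow_deriv])
    show "0 \<le> J (F s) \<and> J (F s) \<le> (1 - c) * W (F s) - W' (F s)"
      using J_nonneg generator_le by blast
  qed (rule W_nonneg)
  also have "F 0 = q"
    unfolding F_def using cn_flow_0 flow_rate_nonzero by blast
  finally show "(\<integral>\<^sup>+ z. ennreal (of_bool (tau < fst z) * W (cn_flow eta eta' q tau))
            + ennreal (of_bool (fst z \<le> tau) * beta * exp (- c * (tau - fst z))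
                        * W (jump (cn_flow eta eta' q (fst z)) (snd z))) \<partial>jump_law)
     \<le> ennreal (exp (- c * tau) * W q)"
    unfolding h_def F_def .
qed

definition jump_laws :: "nat \<Rightarrow> (nat \<Rightarrow> real \<times> 'b) measure" where
  "jump_laws n = (\<Pi>\<^sub>M i\<in>{..<n}. jump_law)"

definition state_after :: "'a \<Rightarrow> nat \<Rightarrow> (nat \<Rightarrow> real \<times> 'b) \<Rightarrow> 'a \<times> 'a" where
  "state_after x0 n y = cn_state eta eta' gamma gamma' G x0 (\<lambda>i. fst (y i)) (\<lambda>i. snd (y i)) n"

text \<open>For a sample \<open>y\<close> of inter-jump times and marks, \<open>value_between_jumps\<close> is
  \<open>beta\<^sup>n W (x\<^sub>t, z\<^sub>t)\<close> on the event of exactly \<open>n\<close> jumps by time \<open>t\<close>; integrating out the later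
  jumps, \<open>value_at_jump\<close> bounds what remains of the sum of these over \<open>n\<close> and more jumps.\<close>
definition value_between_jumps ::
    "('a \<times> 'a \<Rightarrow> real) \<Rightarrow> real \<Rightarrow> 'a \<Rightarrow> real \<Rightarrow> nat \<Rightarrow> (nat \<Rightarrow> real \<times> 'b) \<Rightarrow> ennreal" where
  "value_between_jumps W beta x0 t n y =
     ennreal (of_bool (jumps_by t n y \<and> t < jump_time (Suc n) y) * beta ^ n
       * W (cn_flow eta eta' (state_after x0 n y) (t - jump_time n y)))"

definition value_at_jump ::
    "('a \<times> 'a \<Rightarrow> real) \<Rightarrow> real \<Rightarrow> real \<Rightarrow> 'a \<Rightarrow> real \<Rightarrow> nat \<Rightarrow> (nat \<Rightarrow> real \<times> 'b) \<Rightarrow> ennreal" where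
  "value_at_jump W c beta x0 t n y =
     ennreal (of_bool (jumps_by t n y) * beta ^ n * exp (- c * (t - jump_time n y)) * W (state_after x0 n y))"

lemma state_after_0 [simp]: "state_after x0 0 y = (x0, x0)"
  by (simp add: state_after_def)

lemma state_after_Suc:
  "state_after x0 (Suc n) y = jump (cn_flow eta eta' (state_after x0 n y) (fst (y n))) (snd (y n))"
  by (simp add: state_after_def Let_def jump_def)

lemma state_after_cong: "(\<And>i. i < n \<Longrightarrow> y i = y' i) \<Longrightarrow> state_after x0 n y = state_after x0 n y'"
  unfolding state_after_def by (rule cn_state_cong) auto

lemma value_between_jumps_cong:
  "(\<And>i. i < Suc n \<Longrightarrow> y i = y' i) \<Longrightarrow> value_between_jumps W beta x0 t n y = value_between_jumps W beta x0 t n y'"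
  unfolding value_between_jumps_def
  by (simp cong: jumps_by_cong jump_time_cong state_after_cong)

lemma value_at_jump_cong:
  "(\<And>i. i < n \<Longrightarrow> y i = y' i) \<Longrightarrow> value_at_jump W c beta x0 t n y = value_at_jump W c beta x0 t n y'"
  unfolding value_at_jump_def
  by (simp cong: jumps_by_cong jump_time_cong state_after_cong)

lemma measurable_jump_laws_component:
  assumes "i < m"
  shows "(\<lambda>y. y i) \<in> jump_laws m \<rightarrow>\<^sub>M borel \<Otimes>\<^sub>M P"
  using measurable_component_singleton[of i "{..<m}" "\<lambda>_. jump_law"] assms
  unfolding jump_laws_def by (simp cong: measurable_cong_sets add: sets_jump_law)

lemma measurable_jump_laws_fst [measurable]: "i < m \<Longrightarrow> (\<lambda>y. fst (y i)) \<in> jump_laws m \<rightarrow>\<^sub>M borel"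
  using measurable_jump_laws_component by measurable

lemma measurable_jump_laws_snd [measurable]: "i < m \<Longrightarrow> (\<lambda>y. snd (y i)) \<in> jump_laws m \<rightarrow>\<^sub>M P"
  using measurable_jump_laws_component by measurable

lemma measurable_jump_time [measurable]: "n \<le> m \<Longrightarrow> jump_time n \<in> jump_laws m \<rightarrow>\<^sub>M borel"
proof (induction n)
  case (Suc n)
  then have [measurable]: "jump_time n \<in> jump_laws m \<rightarrow>\<^sub>M borel" "(\<lambda>y. fst (y n)) \<in> jump_laws m \<rightarrow>\<^sub>M borel"
    by auto
  show ?case
    unfolding jump_time_Suc[abs_def] by measurable
qed (simp add: jump_time_def[abs_def] cn_time_def)

lemma measurable_state_after [measurable]: "n \<le> m \<Longrightarrow> state_after x0 n \<in> jump_laws m \<rightarrow>\<^sub>M borel"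
proof (induction n)
  case (Suc n)
  then have [measurable]: "state_after x0 n \<in> jump_laws m \<rightarrow>\<^sub>M borel"
    "(\<lambda>y. fst (y n)) \<in> jump_laws m \<rightarrow>\<^sub>M borel" "(\<lambda>y. snd (y n)) \<in> jump_laws m \<rightarrow>\<^sub>M P"
    by auto
  show ?case
    unfolding state_after_Suc[abs_def] by measurable
qed (simp add: state_after_def[abs_def])

lemma measurable_jumps_by [measurable]: "n \<le> m \<Longrightarrow> Measurable.pred (jump_laws m) (jumps_by t n)"
proof (induction n)
  case (Suc n)
  then have [measurable]: "Measurable.pred (jump_laws m) (jumps_by t n)"
    "jump_time (Suc n) \<in> jump_laws m \<rightarrow>\<^sub>M borel"
    by auto
  show ?case
    unfolding jumps_by_Suc[abs_def] by measurable
qed (simp add: jumps_by_def[abs_def])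

lemma measurable_value_between_jumps [measurable]:
  assumes [measurable]: "W \<in> borel_measurable borel"
  shows "value_between_jumps W beta x0 t n \<in> borel_measurable (jump_laws (Suc n))"
proof -
  have [measurable]: "jump_time n \<in> jump_laws (Suc n) \<rightarrow>\<^sub>M borel"
    "jump_time (Suc n) \<in> jump_laws (Suc n) \<rightarrow>\<^sub>M borel"
    "state_after x0 n \<in> jump_laws (Suc n) \<rightarrow>\<^sub>M borel"
    "Measurable.pred (jump_laws (Suc n)) (jumps_by t n)"
    by auto
  show ?thesis
    unfolding value_between_jumps_def[abs_def] by measurable
qed

lemma measurable_value_at_jump [measurable]:
  assumes [measurable]: "W \<in> borel_measurable borel"
  shows "value_at_jump W c beta x0 t n \<in> borel_measurable (jump_laws n)"
  unfolding value_at_jump_def[abs_def] by measurable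

lemma value_between_jumps_sums:
  assumes "t < jump_time (Suc k) y"
  shows "(\<lambda>n. value_between_jumps W 1 x0 t n y)
    sums ennreal (W (cn_process eta eta' gamma gamma' G x0 (\<lambda>i. fst (y i)) (\<lambda>i. snd (y i)) t))"
proof -
  define n0 where "n0 = (LEAST n. t < jump_time (Suc n) y)"
  have n0: "t < jump_time (Suc n0) y"
    unfolding n0_def using assms by (rule LeastI)
  have before_n0: "jump_time (Suc i) y \<le> t" if "i < n0" for i
    using not_less_Least[OF that[unfolded n0_def]] by simp
  have "value_between_jumps W 1 x0 t n y
      = (if n = n0 then ennreal (W (cn_process eta eta' gamma gamma' G x0 (\<lambda>i. fst (y i)) (\<lambda>i. snd (y i)) t)) else 0)"
    for n
  proof (cases n n0 rule: linorder_cases)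
    case less
    then show ?thesis
      using before_n0[of n] by (simp add: value_between_jumps_def)
  next
    case equal
    then show ?thesis
      using before_n0 n0
      by (simp add: value_between_jumps_def jumps_by_def cn_process_def state_after_def jump_time_def n0_def Let_def)
  next
    case greater
    then show ?thesis
      using n0 by (auto simp: value_between_jumps_def jumps_by_def)
  qed
  then show ?thesis
    using sums_single[of n0] by simp
qed

context
  fixes W :: "'a \<times> 'a \<Rightarrow> real" and c beta :: real
  assumes decay: "first_jump_decay W c beta"
    and W_measurable [measurable]: "W \<in> borel_measurable borel"
    and W_nonneg: "\<And>p. 0 \<le> W p" and beta_nonneg: "0 \<le> beta"
begin

lemma nn_integral_next_jump_le:
  assumes t: "0 \<le> t"
  shows "(\<integral>\<^sup>+ z. value_between_jumps W beta x0 t n (y(n := z))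
      + value_at_jump W c beta x0 t (Suc n) (y(n := z)) \<partial>jump_law)
    \<le> value_at_jump W c beta x0 t n y"
proof -
  have [simp]: "jumps_by t n (y(n := z)) = jumps_by t n y" "jump_time n (y(n := z)) = jump_time n y"
    "state_after x0 n (y(n := z)) = state_after x0 n y" for z
    by (auto intro!: jumps_by_cong jump_time_cong state_after_cong)
  show ?thesis
  proof (cases "jumps_by t n y")
    case False
    then show ?thesis
      by (simp add: value_between_jumps_def value_at_jump_def jumps_by_Suc)
  next
    case True
    define q where "q = state_after x0 n y"
    define tau where "tau = t - jump_time n y"
    have tau: "0 \<le> tau"
      using True t by (cases n) (auto simp: tau_def jumps_by_def)
    define h where "h z = ennreal (of_bool (tau < fst z) * W (cn_flow eta eta' q tau))
      + ennreal (of_bool (fst z \<le> tau) * beta * exp (- c * (tau - fst z))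
        * W (jump (cn_flow eta eta' q (fst z)) (snd z)))" for z :: "real \<times> 'b"
    have [measurable]: "h \<in> borel_measurable jump_law"
      unfolding h_def by (simp cong: measurable_cong_sets add: sets_jump_law)
    have "value_between_jumps W beta x0 t n (y(n := z)) + value_at_jump W c beta x0 t (Suc n) (y(n := z))
        = ennreal (beta ^ n) * h z" for z
      using True W_nonneg beta_nonneg
      by (cases "tau < fst z")
        (auto simp: value_between_jumps_def value_at_jump_def h_def jumps_by_Suc jump_time_Suc
          state_after_Suc tau_def q_def ennreal_mult algebra_simps)
    then have "(\<integral>\<^sup>+ z. value_between_jumps W beta x0 t n (y(n := z))
        + value_at_jump W c beta x0 t (Suc n) (y(n := z)) \<partial>jump_law) = ennreal (beta ^ n) * (\<integral>\<^sup>+ z. h z \<partial>jump_law)"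
      by (simp add: nn_integral_cmult)
    also have "\<dots> \<le> ennreal (beta ^ n) * ennreal (exp (- c * tau) * W q)"
      unfolding h_def by (intro mult_left_mono first_jump_decayD[OF decay tau]) simp
    also have "\<dots> = value_at_jump W c beta x0 t n y"
      using True W_nonneg beta_nonneg
      by (simp add: value_at_jump_def tau_def q_def ennreal_mult[symmetric] mult_ac)
    finally show ?thesis .
  qed
qed

lemma nn_integral_value_at_jump_Suc_le:
  assumes "0 \<le> t"
  shows "(\<integral>\<^sup>+ y. value_between_jumps W beta x0 t n y + value_at_jump W c beta x0 t (Suc n) y \<partial>jump_laws (Suc n))
    \<le> (\<integral>\<^sup>+ y. value_at_jump W c beta x0 t n y \<partial>jump_laws n)"
proof -
  interpret J: prob_space jump_law
    by (rule prob_space_jump_law)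
  interpret product_sigma_finite "\<lambda>_. jump_law"
    by (simp add: product_sigma_finite_def J.sigma_finite_measure_axioms)
  have ins: "{..<Suc n} = insert n {..<n}"
    by auto
  have "(\<lambda>y. value_between_jumps W beta x0 t n y + value_at_jump W c beta x0 t (Suc n) y)
      \<in> borel_measurable (jump_laws (Suc n))"
    by measurable
  then have "(\<integral>\<^sup>+ y. value_between_jumps W beta x0 t n y + value_at_jump W c beta x0 t (Suc n) y \<partial>jump_laws (Suc n))
      = (\<integral>\<^sup>+ y. (\<integral>\<^sup>+ z. value_between_jumps W beta x0 t n (y(n := z))
          + value_at_jump W c beta x0 t (Suc n) (y(n := z)) \<partial>jump_law) \<partial>jump_laws n)"
    unfolding jump_laws_def ins by (intro product_nn_integral_insert) auto
  also have "\<dots> \<le> (\<integral>\<^sup>+ y. value_at_jump W c beta x0 t n y \<partial>jump_laws n)"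
    by (intro nn_integral_mono nn_integral_next_jump_le assms)
  finally show ?thesis .
qed

lemma nn_integral_value_between_jumps_sum_le:
  assumes "0 \<le> t"
  shows "(\<Sum>k<N. \<integral>\<^sup>+ y. value_between_jumps W beta x0 t k y \<partial>jump_laws (Suc k))
      + (\<integral>\<^sup>+ y. value_at_jump W c beta x0 t N y \<partial>jump_laws N)
    \<le> ennreal (exp (- c * t) * W (x0, x0))"
proof (induction N)
  case 0
  interpret prob_space "jump_laws 0"
    unfolding jump_laws_def by (intro prob_space_PiM prob_space_jump_law)
  show ?case
    by (simp add: value_at_jump_def emeasure_space_1)
next
  case (Suc N)
  have "(\<Sum>k<Suc N. \<integral>\<^sup>+ y. value_between_jumps W beta x0 t k y \<partial>jump_laws (Suc k))
      + (\<integral>\<^sup>+ y. value_at_jump W c beta x0 t (Suc N) y \<partial>jump_laws (Suc N))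
    = (\<Sum>k<N. \<integral>\<^sup>+ y. value_between_jumps W beta x0 t k y \<partial>jump_laws (Suc k))
      + (\<integral>\<^sup>+ y. value_between_jumps W beta x0 t N y + value_at_jump W c beta x0 t (Suc N) y \<partial>jump_laws (Suc N))"
    by (simp add: nn_integral_add add.assoc)
  also have "\<dots> \<le> (\<Sum>k<N. \<integral>\<^sup>+ y. value_between_jumps W beta x0 t k y \<partial>jump_laws (Suc k))
      + (\<integral>\<^sup>+ y. value_at_jump W c beta x0 t N y \<partial>jump_laws N)"
    by (intro add_left_mono nn_integral_value_at_jump_Suc_le assms)
  also have "\<dots> \<le> ennreal (exp (- c * t) * W (x0, x0))"
    by (rule Suc.IH)
  finally show ?case .
qed

end

end

lemma (in prob_space) distr_restrict_iid:
  assumes indep: "indep_vars (\<lambda>_. N) X I" and "J \<subseteq> I" "J \<noteq> {}"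
    and rv: "\<And>i. i \<in> J \<Longrightarrow> random_variable N (X i)"
    and law: "\<And>i. i \<in> J \<Longrightarrow> distr M N (X i) = Q"
  shows "distr M (\<Pi>\<^sub>M i\<in>J. Q) (\<lambda>w. \<lambda>i\<in>J. X i w) = (\<Pi>\<^sub>M i\<in>J. Q)"
proof -
  obtain j where "j \<in> J"
    using \<open>J \<noteq> {}\<close> by blast
  then have "sets Q = sets N"
    using law[of j] by (metis sets_distr)
  then have "distr M (\<Pi>\<^sub>M i\<in>J. Q) (\<lambda>w. \<lambda>i\<in>J. X i w) = distr M (\<Pi>\<^sub>M i\<in>J. N) (\<lambda>w. \<lambda>i\<in>J. X i w)"
    by (intro distr_cong refl sets_PiM_cong) auto
  also have "\<dots> = (\<Pi>\<^sub>M i\<in>J. distr M N (X i))"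
    using indep_vars_iff_distr_eq_PiM'[where I = J and M' = "\<lambda>_. N" and X = X]
      indep_vars_subset[OF indep \<open>J \<subseteq> I\<close>] rv \<open>J \<noteq> {}\<close>
    by blast
  also have "\<dots> = (\<Pi>\<^sub>M i\<in>J. Q)"
    using law by (intro PiM_cong) auto
  finally show ?thesis .
qed

locale continuized_sampling = continuized_process P eta eta' gamma gamma' G + M: prob_space M
  for P :: "'b measure" and eta eta' gamma gamma' :: real and G :: "'a::euclidean_space \<Rightarrow> 'b \<Rightarrow> 'a"
    and M :: "'w measure" +
  fixes E :: "nat \<Rightarrow> 'w \<Rightarrow> real" and xi :: "nat \<Rightarrow> 'w \<Rightarrow> 'b"
  assumes E_measurable: "\<And>k. E k \<in> borel_measurable M"
    and xi_measurable: "\<And>k. xi k \<in> M \<rightarrow>\<^sub>M P"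
    and law: "\<And>k. distr M (borel \<Otimes>\<^sub>M P) (\<lambda>w. (E k w, xi k w))
      = density lborel (exponential_density 1) \<Otimes>\<^sub>M P"
    and indep: "M.indep_vars (\<lambda>_. borel \<Otimes>\<^sub>M P) (\<lambda>k w. (E k w, xi k w)) UNIV"
begin

declare E_measurable [measurable] xi_measurable [measurable]

definition sample :: "'w \<Rightarrow> nat \<Rightarrow> real \<times> 'b" where
  "sample w i = (E i w, xi i w)"

lemma measurable_restrict_sample [measurable]: "(\<lambda>w. restrict (sample w) {..<n}) \<in> M \<rightarrow>\<^sub>M jump_laws n"
proof -
  have "(\<lambda>w. (E i w, xi i w)) \<in> M \<rightarrow>\<^sub>M jump_law" for i
    using measurable_Pair[OF E_measurable xi_measurable] by (simp cong: measurable_cong_sets add: sets_jump_law)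
  then show ?thesis
    unfolding jump_laws_def sample_def by (intro measurable_restrict)
qed

lemma jump_time_sample: "jump_time n (sample w) = (\<Sum>i<n. E i w)"
  by (simp add: jump_time_def cn_time_def sample_def)

lemma nn_integral_restrict_sample:
  assumes "h \<in> borel_measurable (jump_laws (Suc n))"
  shows "(\<integral>\<^sup>+ w. h (restrict (sample w) {..<Suc n}) \<partial>M) = (\<integral>\<^sup>+ y. h y \<partial>jump_laws (Suc n))"
proof -
  have distr: "distr M (jump_laws (Suc n)) (\<lambda>w. restrict (sample w) {..<Suc n}) = jump_laws (Suc n)"
    unfolding jump_laws_def sample_def
    by (rule M.distr_restrict_iid[OF indep]) (auto simp: law jump_law_def)
  have "(\<integral>\<^sup>+ w. h (restrict (sample w) {..<Suc n}) \<partial>M)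
      = (\<integral>\<^sup>+ y. h y \<partial>distr M (jump_laws (Suc n)) (\<lambda>w. restrict (sample w) {..<Suc n}))"
    by (rule nn_integral_distr[symmetric, OF measurable_restrict_sample]) (simp add: distr assms)
  then show ?thesis
    by (simp add: distr)
qed

lemma measure_jumps_by_le:
  assumes t: "0 \<le> t"
  shows "measure M {w \<in> space M. jumps_by t (Suc n) (sample w)} \<le> exp t / 2 ^ Suc n"
proof -
  define B where "B = {w \<in> space M. jumps_by t (Suc n) (sample w)}"
  have B_sets: "B \<in> sets M"
    unfolding B_def jumps_by_def jump_time_sample by measurable
  have counting_decay: "first_jump_decay (\<lambda>_. 1) (-1) 2"
    by (rule first_jump_decayI[where W' = "\<lambda>_. 0" and J = "\<lambda>_. 2"]) (auto simp: P.emeasure_space_1)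
  let ?R = "value_at_jump (\<lambda>_. 1) (-1) 2 0 t (Suc n)"
  have "ennreal (2 ^ Suc n) * emeasure M B = (\<integral>\<^sup>+ w. ennreal (2 ^ Suc n) * indicator B w \<partial>M)"
    using B_sets by (rule nn_integral_cmult_indicator[symmetric])
  also have "\<dots> \<le> (\<integral>\<^sup>+ w. ?R (restrict (sample w) {..<Suc n}) \<partial>M)"
  proof (rule nn_integral_mono)
    fix w
    have "?R (restrict (sample w) {..<Suc n}) = ?R (sample w)"
      by (intro value_at_jump_cong) simp
    moreover have "2 ^ Suc n \<le> 2 ^ Suc n * exp (t - jump_time (Suc n) (sample w))" if "w \<in> B"
      using that by (simp add: B_def jumps_by_def)
    ultimately show "ennreal (2 ^ Suc n) * indicator B w \<le> ?R (restrict (sample w) {..<Suc n})"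
      by (auto simp: B_def indicator_def value_at_jump_def intro!: ennreal_leI)
  qed
  also have "\<dots> = (\<integral>\<^sup>+ y. ?R y \<partial>jump_laws (Suc n))"
    by (rule nn_integral_restrict_sample) measurable
  also have "\<dots> \<le> ennreal (exp (- (-1) * t) * 1)"
    by (rule order_trans[OF add_increasing[OF zero_le order_refl]
          nn_integral_value_between_jumps_sum_le[OF counting_decay _ _ _ t]]) simp_all
  finally have "ennreal (2 ^ Suc n * measure M B) \<le> ennreal (exp t)"
    by (simp add: M.emeasure_eq_measure ennreal_mult)
  then show ?thesis
    unfolding B_def by (simp add: ennreal_le_iff field_simps del: power_Suc)
qed

lemma AE_finitely_many_jumps:
  assumes t: "0 \<le> t"
  shows "AE w in M. \<exists>k. t < jump_time (Suc k) (sample w)"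
proof -
  define A where "A = {w \<in> space M. \<forall>k. jump_time (Suc k) (sample w) \<le> t}"
  have A_sets: "A \<in> sets M"
    unfolding A_def jump_time_sample by measurable
  have "measure M A \<le> exp t / 2 ^ Suc n" for n
  proof -
    have "A \<subseteq> {w \<in> space M. jumps_by t (Suc n) (sample w)}"
      by (auto simp: A_def jumps_by_def)
    then have "measure M A \<le> measure M {w \<in> space M. jumps_by t (Suc n) (sample w)}"
      unfolding jumps_by_def jump_time_sample by (intro M.finite_measure_mono) measurable
    then show ?thesis
      using measure_jumps_by_le[OF t, of n] by linarith
  qed
  moreover have "(\<lambda>n. exp t / 2 ^ Suc n) \<longlonglongrightarrow> 0"
    by (intro LIMSEQ_Suc tendsto_divide_0[OF tendsto_const] filterlim_realpow_sequentially_gt1) simp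
  ultimately have "measure M A \<le> 0"
    by (intro LIMSEQ_le_const) auto
  then have "A \<in> null_sets M"
    using A_sets by (simp add: M.emeasure_eq_measure measure_nonneg antisym null_sets_def)
  then show ?thesis
    by (rule AE_I') (auto simp: A_def not_less)
qed

theorem nn_integral_cn_process_le:
  assumes decay: "first_jump_decay W c 1" and [measurable]: "W \<in> borel_measurable borel"
    and W_nonneg: "\<And>p. 0 \<le> W p" and t: "0 \<le> t"
  shows "(\<integral>\<^sup>+ w. ennreal (W (cn_process eta eta' gamma gamma' G x0 (\<lambda>k. E k w) (\<lambda>k. xi k w) t)) \<partial>M)
    \<le> ennreal (exp (- c * t) * W (x0, x0))"
proof -
  let ?V = "\<lambda>n y. value_between_jumps W 1 x0 t n y"
  have "AE w in M. ennreal (W (cn_process eta eta' gamma gamma' G x0 (\<lambda>k. E k w) (\<lambda>k. xi k w) t))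
      = (\<Sum>n. ?V n (restrict (sample w) {..<Suc n}))"
    using AE_finitely_many_jumps[OF t]
  proof eventually_elim
    case (elim w)
    then obtain k where "t < jump_time (Suc k) (sample w)"
      by blast
    moreover have "?V n (restrict (sample w) {..<Suc n}) = ?V n (sample w)" for n
      by (intro value_between_jumps_cong) simp
    ultimately show ?case
      using value_between_jumps_sums by (simp add: sample_def sums_iff)
  qed
  then have "(\<integral>\<^sup>+ w. ennreal (W (cn_process eta eta' gamma gamma' G x0 (\<lambda>k. E k w) (\<lambda>k. xi k w) t)) \<partial>M)
      = (\<integral>\<^sup>+ w. (\<Sum>n. ?V n (restrict (sample w) {..<Suc n})) \<partial>M)"
    by (rule nn_integral_cong_AE)
  also have "\<dots> = (\<Sum>n. \<integral>\<^sup>+ w. ?V n (restrict (sample w) {..<Suc n}) \<partial>M)"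
    by (rule nn_integral_suminf) measurable
  also have "\<dots> = (\<Sum>n. \<integral>\<^sup>+ y. ?V n y \<partial>jump_laws (Suc n))"
    by (intro suminf_cong nn_integral_restrict_sample) measurable
  also have "\<dots> \<le> ennreal (exp (- c * t) * W (x0, x0))"
    unfolding suminf_eq_SUP
  proof (rule SUP_least)
    fix N
    show "(\<Sum>n<N. \<integral>\<^sup>+ y. ?V n y \<partial>jump_laws (Suc n)) \<le> ennreal (exp (- c * t) * W (x0, x0))"
      by (rule order_trans[OF add_increasing2[OF zero_le order_refl]
            nn_integral_value_between_jumps_sum_le[OF decay _ W_nonneg _ t]]) simp_all
  qed
  finally show ?thesis .
qed

end

section \<open>A Lyapunov function for accelerated SGD under strong growth\<close>

locale accelerated_sgc = P: prob_space P
  for P :: "'b measure" +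
  fixes f :: "'a::euclidean_space \<Rightarrow> real" and gradf :: "'a \<Rightarrow> 'a"
    and fstar L mu rho gamma gamma' eta eta' :: real and G :: "'a \<Rightarrow> 'b \<Rightarrow> 'a"
  assumes grad: "\<And>x. (f has_derivative (\<lambda>h. gradf x \<bullet> h)) (at x)"
    and fmin: "\<And>x. fstar \<le> f x"
    and L_pos: "L > 0" and mu_pos: "mu > 0" and rho_ge: "rho \<ge> 1"
    and smooth: "\<And>x y. f x - f y - gradf y \<bullet> (x - y) \<le> L / 2 * (norm (x - y))\<^sup>2"
    and PL: "\<And>x. (norm (gradf x))\<^sup>2 \<ge> 2 * mu * (f x - fstar)"
    and G_measurable: "(\<lambda>(x, s). G x s) \<in> borel_measurable (borel \<Otimes>\<^sub>M P)"
    and unbiased: "\<And>x. integrable P (G x) \<and> (\<integral>s. G x s \<partial>P) = gradf x"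
    and SGC: "\<And>x. (\<integral>\<^sup>+ s. ennreal ((norm (G x s))\<^sup>2) \<partial>P) \<le> ennreal (rho * (norm (gradf x))\<^sup>2)"
    and gamma_pos: "0 < gamma" and gamma_le: "gamma \<le> 1 / (rho * L)"
    and gamma'_def: "gamma' = gamma + sqrt (gamma / (2 * rho))"
    and eta_def: "eta = sqrt (gamma / (2 * rho))"
    and eta'_def: "eta' = mu * gamma / 2 - sqrt (gamma / (2 * rho))"
begin

lemma flow_rate_eq: "eta + eta' = mu * gamma / 2"
  by (simp add: eta_def eta'_def)

lemma is_continuized_process: "continuized_process P eta eta' G"
  using G_measurable mu_pos gamma_pos by unfold_locales (simp_all add: flow_rate_eq)

sublocale continuized_process P eta eta' gamma gamma' G
  by (rule is_continuized_process)

definition lyapunov :: "'a \<times> 'a \<Rightarrow> real" where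
  "lyapunov p = f (fst p) - fstar + (norm (fst p - snd p))\<^sup>2 / 2"

definition lyapunov_drift :: "'a \<times> 'a \<Rightarrow> real" where
  "lyapunov_drift p = - eta * ((fst p - snd p) \<bullet> gradf (fst p)) - mu * gamma / 2 * (norm (fst p - snd p))\<^sup>2"

definition lyapunov_jump_bound :: "'a \<times> 'a \<Rightarrow> real" where
  "lyapunov_jump_bound p = lyapunov p - gamma * (norm (gradf (fst p)))\<^sup>2
     + eta * ((fst p - snd p) \<bullet> gradf (fst p)) + (L * gamma\<^sup>2 + eta\<^sup>2) / 2 * rho * (norm (gradf (fst p)))\<^sup>2"

lemma lyapunov_nonneg: "0 \<le> lyapunov p"
  using fmin[of "fst p"] by (simp add: lyapunov_def)

lemma measurable_lyapunov [measurable]: "lyapunov \<in> borel_measurable borel"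
proof -
  have "continuous_on UNIV f"
    using grad by (meson has_derivative_continuous continuous_at_imp_continuous_on)
  then have [measurable]: "f \<in> borel_measurable borel"
    by (rule borel_measurable_continuous_onI)
  show ?thesis
    unfolding lyapunov_def[abs_def] borel_prod[symmetric] by measurable
qed

lemma G_second_moment:
  shows "integrable P (\<lambda>s. (norm (G x s))\<^sup>2)" and "(\<integral>s. (norm (G x s))\<^sup>2 \<partial>P) \<le> rho * (norm (gradf x))\<^sup>2"
proof -
  have [measurable]: "G x \<in> borel_measurable P"
    using measurable_G[of "\<lambda>_. x" P "\<lambda>s. s"] by simp
  have "(\<integral>\<^sup>+ s. ennreal ((norm (G x s))\<^sup>2) \<partial>P) < \<infinity>"
    using SGC[of x] by (simp add: le_less_trans)
  then show integrable: "integrable P (\<lambda>s. (norm (G x s))\<^sup>2)"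
    by (intro integrableI_bounded) auto
  have "ennreal (\<integral>s. (norm (G x s))\<^sup>2 \<partial>P) = (\<integral>\<^sup>+ s. ennreal ((norm (G x s))\<^sup>2) \<partial>P)"
    using integrable by (intro nn_integral_eq_integral[symmetric]) auto
  also have "\<dots> \<le> ennreal (rho * (norm (gradf x))\<^sup>2)"
    by (rule SGC)
  finally show "(\<integral>s. (norm (G x s))\<^sup>2 \<partial>P) \<le> rho * (norm (gradf x))\<^sup>2"
    using rho_ge by (simp add: ennreal_le_iff)
qed

text \<open>Since \<open>gamma' - gamma = eta\<close>, a jump along \<open>g\<close> moves \<open>x - z\<close> by \<open>eta g\<close>.\<close>
lemma lyapunov_jump_le:
  "lyapunov (x - gamma *\<^sub>R g, z - gamma' *\<^sub>R g)
    \<le> lyapunov (x, z) - gamma * (gradf x \<bullet> g) + eta * ((x - z) \<bullet> g) + (L * gamma\<^sup>2 + eta\<^sup>2) / 2 * (norm g)\<^sup>2"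
proof -
  have "f (x - gamma *\<^sub>R g) \<le> f x - gamma * (gradf x \<bullet> g) + L / 2 * gamma\<^sup>2 * (norm g)\<^sup>2"
    using smooth[of "x - gamma *\<^sub>R g" x] gamma_pos
    by (simp add: power_mult_distrib algebra_simps inner_diff_right)
  moreover have "x - gamma *\<^sub>R g - (z - gamma' *\<^sub>R g) = (x - z) + eta *\<^sub>R g"
    by (simp add: gamma'_def eta_def algebra_simps)
  moreover have "(norm ((x - z) + eta *\<^sub>R g))\<^sup>2 = (norm (x - z))\<^sup>2 + 2 * eta * ((x - z) \<bullet> g) + eta\<^sup>2 * (norm g)\<^sup>2"
    unfolding power2_norm_eq_inner
    by (simp add: inner_add_left inner_add_right inner_commute power2_eq_square algebra_simps)
  ultimately show ?thesis
    by (simp add: lyapunov_def algebra_simps add_divide_distrib diff_divide_distrib)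
qed

lemma nn_integral_lyapunov_jump_le:
  shows "(\<integral>\<^sup>+ s. ennreal (lyapunov (jump p s)) \<partial>P) \<le> ennreal (lyapunov_jump_bound p)"
    and "0 \<le> lyapunov_jump_bound p"
proof -
  obtain x z where p: "p = (x, z)"
    by (cases p)
  define R where "R s = lyapunov p - gamma * (gradf x \<bullet> G x s) + eta * ((x - z) \<bullet> G x s)
    + (L * gamma\<^sup>2 + eta\<^sup>2) / 2 * (norm (G x s))\<^sup>2" for s
  have R_ge: "lyapunov (jump p s) \<le> R s" for s
    unfolding p jump_def R_def fst_conv snd_conv by (rule lyapunov_jump_le)
  have R_nonneg: "0 \<le> R s" for s
    using R_ge[of s] lyapunov_nonneg[of "jump p s"] by simp
  have "integrable P (G x)" and mean: "(\<integral>s. G x s \<partial>P) = gradf x"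
    using unbiased[of x] by auto
  then have "integrable P R"
    "(\<integral>s. R s \<partial>P) = lyapunov p - gamma * (gradf x \<bullet> gradf x) + eta * ((x - z) \<bullet> gradf x)
       + (L * gamma\<^sup>2 + eta\<^sup>2) / 2 * (\<integral>s. (norm (G x s))\<^sup>2 \<partial>P)"
    unfolding R_def using G_second_moment(1)[of x]
    by (simp_all add: integral_add integral_diff integral_inner_right P.prob_space)
  moreover have "(L * gamma\<^sup>2 + eta\<^sup>2) / 2 * (\<integral>s. (norm (G x s))\<^sup>2 \<partial>P)
      \<le> (L * gamma\<^sup>2 + eta\<^sup>2) / 2 * (rho * (norm (gradf x))\<^sup>2)"
    using L_pos by (intro mult_left_mono G_second_moment(2)) auto
  ultimately have R_integral: "integrable P R" "(\<integral>s. R s \<partial>P) \<le> lyapunov_jump_bound p"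
    by (simp_all add: lyapunov_jump_bound_def p power2_norm_eq_inner algebra_simps)
  have "(\<integral>\<^sup>+ s. ennreal (lyapunov (jump p s)) \<partial>P) \<le> (\<integral>\<^sup>+ s. ennreal (R s) \<partial>P)"
    by (intro nn_integral_mono ennreal_leI R_ge)
  also have "\<dots> = ennreal (\<integral>s. R s \<partial>P)"
    using R_integral R_nonneg by (intro nn_integral_eq_integral) auto
  also have "\<dots> \<le> ennreal (lyapunov_jump_bound p)"
    using R_integral by (intro ennreal_leI)
  finally show "(\<integral>\<^sup>+ s. ennreal (lyapunov (jump p s)) \<partial>P) \<le> ennreal (lyapunov_jump_bound p)" .
  show "0 \<le> lyapunov_jump_bound p"
    using R_integral Bochner_Integration.integral_nonneg[of P R] R_nonneg by fastforce
qed

lemma lyapunov_has_real_derivative: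
  assumes "(p has_vector_derivative p') (at s)"
  shows "((\<lambda>s. lyapunov (p s)) has_real_derivative
      gradf (fst (p s)) \<bullet> fst p' + (fst (p s) - snd (p s)) \<bullet> (fst p' - snd p')) (at s)"
proof -
  note p' = assms[unfolded has_vector_derivative_def]
  have x': "((\<lambda>s. fst (p s)) has_derivative (\<lambda>h. h *\<^sub>R fst p')) (at s)"
    using has_derivative_fst[OF p'] by simp
  have u': "((\<lambda>s. fst (p s) - snd (p s)) has_derivative (\<lambda>h. h *\<^sub>R (fst p' - snd p'))) (at s)"
    using has_derivative_diff[OF has_derivative_fst[OF p'] has_derivative_snd[OF p']]
    by (simp add: scaleR_diff_right)
  have "((\<lambda>s. f (fst (p s)) - fstar + 1 / 2 * ((fst (p s) - snd (p s)) \<bullet> (fst (p s) - snd (p s))))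
      has_derivative (\<lambda>h. gradf (fst (p s)) \<bullet> (h *\<^sub>R fst p') - 0
        + 1 / 2 * ((fst (p s) - snd (p s)) \<bullet> (h *\<^sub>R (fst p' - snd p'))
          + (h *\<^sub>R (fst p' - snd p')) \<bullet> (fst (p s) - snd (p s))))) (at s)"
    by (intro has_derivative_add has_derivative_diff has_derivative_compose[OF x' grad]
        has_derivative_const has_derivative_mult_right has_derivative_inner u')
  moreover have "(\<lambda>s. lyapunov (p s))
      = (\<lambda>s. f (fst (p s)) - fstar + 1 / 2 * ((fst (p s) - snd (p s)) \<bullet> (fst (p s) - snd (p s))))"
    by (simp add: fun_eq_iff lyapunov_def power2_norm_eq_inner)
  ultimately show ?thesis
    unfolding has_field_derivative_def
    by (elim ssubst has_derivative_eq_rhs) (simp add: fun_eq_iff inner_commute algebra_simps)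
qed

lemma lyapunov_flow_deriv:
  "((\<lambda>s. lyapunov (cn_flow eta eta' q s)) has_real_derivative lyapunov_drift (cn_flow eta eta' q s)) (at s)"
proof -
  obtain x z where q: "q = (x, z)"
    by (cases q)
  let ?p = "cn_flow eta eta' (x, z) s"
  have "gradf (fst ?p) \<bullet> (eta *\<^sub>R (snd ?p - fst ?p))
      + (fst ?p - snd ?p) \<bullet> (eta *\<^sub>R (snd ?p - fst ?p) - eta' *\<^sub>R (fst ?p - snd ?p))
    = lyapunov_drift ?p"
    unfolding lyapunov_drift_def flow_rate_eq[symmetric] power2_norm_eq_inner
    by (simp add: inner_diff_left inner_diff_right inner_commute algebra_simps)
  then show ?thesis
    using lyapunov_has_real_derivative[OF cn_flow_ode[OF flow_rate_nonzero, of x z s]] q by simp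
qed

text \<open>Smoothness with \<open>gamma rho L \<le> 1\<close> and \<open>eta\<^sup>2 = gamma / (2 rho)\<close> keep a quarter of the
  descent \<open>gamma |\<nabla>f|\<^sup>2\<close>, which the PL inequality turns into \<open>(mu gamma / 2) (f - f\<^sup>*)\<close>.\<close>
lemma lyapunov_generator_le:
  "lyapunov_jump_bound p \<le> (1 - mu * gamma / 2) * lyapunov p - lyapunov_drift p"
proof -
  obtain x z where p: "p = (x, z)"
    by (cases p)
  define a where "a = (norm (x - z))\<^sup>2"
  define b where "b = (norm (gradf x))\<^sup>2"
  have rho_pos: "0 < rho"
    using rho_ge by simp
  have "(1 - mu * gamma / 2) * lyapunov p - lyapunov_drift p - lyapunov_jump_bound p
      = gamma * b - (L * gamma\<^sup>2 + eta\<^sup>2) / 2 * rho * b - mu * gamma / 2 * (f x - fstar) + mu * gamma / 2 * a / 2"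
    by (simp add: lyapunov_jump_bound_def lyapunov_drift_def lyapunov_def p a_def b_def algebra_simps
      add_divide_distrib diff_divide_distrib)
  moreover have "(L * gamma\<^sup>2 + eta\<^sup>2) / 2 * rho * b = L * gamma\<^sup>2 * rho * b / 2 + gamma * b / 4"
    using gamma_pos rho_pos by (simp add: eta_def field_simps)
  moreover have "L * gamma\<^sup>2 * rho * b \<le> gamma * b"
  proof -
    have "(gamma * rho * L) * (gamma * b) \<le> 1 * (gamma * b)"
      using gamma_le rho_pos L_pos gamma_pos by (intro mult_right_mono) (auto simp: field_simps b_def)
    then show ?thesis
      by (simp add: power2_eq_square algebra_simps)
  qed
  moreover have "mu * gamma / 2 * (f x - fstar) \<le> gamma * b / 4"
    using mult_left_mono[OF PL[of x], of "gamma / 4"] gamma_pos by (simp add: b_def algebra_simps)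
  moreover have "0 \<le> mu * gamma / 2 * a / 2"
    using mu_pos gamma_pos by (simp add: a_def)
  ultimately show ?thesis
    by linarith
qed

lemma first_jump_decay_lyapunov: "first_jump_decay lyapunov (mu * gamma / 2) 1"
  using nn_integral_lyapunov_jump_le lyapunov_generator_le
  by (intro first_jump_decayI[where W' = lyapunov_drift and J = lyapunov_jump_bound]
      lyapunov_nonneg lyapunov_flow_deriv measurable_lyapunov) auto

end

theorem proposition3:
  fixes f :: "'a::euclidean_space \<Rightarrow> real"
    and gradf :: "'a \<Rightarrow> 'a"
    and fstar L mu rho gamma gamma' eta eta' :: real
    and P :: "'b measure"
    and G :: "'a \<Rightarrow> 'b \<Rightarrow> 'a"
    and M :: "'w measure"
    and E :: "nat \<Rightarrow> 'w \<Rightarrow> real"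
    and xi :: "nat \<Rightarrow> 'w \<Rightarrow> 'b"
    and x0 :: 'a
    and t :: real
  assumes grad: "\<And>x. (f has_derivative (\<lambda>h. gradf x \<bullet> h)) (at x)"
    and fmin: "\<And>x. fstar \<le> f x" and fmin_att: "\<exists>x. f x = fstar"
    and L_pos: "L > 0" and mu_pos: "mu > 0" and rho_ge: "rho \<ge> 1"
    and smooth: "\<And>x y. f x - f y - gradf y \<bullet> (x - y) \<le> L / 2 * (norm (x - y))\<^sup>2"
    and PL: "\<And>x. (norm (gradf x))\<^sup>2 \<ge> 2 * mu * (f x - fstar)"
    and P_prob: "prob_space P"
    and G_meas: "(\<lambda>(x, s). G x s) \<in> borel_measurable (borel \<Otimes>\<^sub>M P)"
    and unbiased: "\<And>x. integrable P (G x) \<and> (\<integral>s. G x s \<partial>P) = gradf x"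
    and SGC: "\<And>x. (\<integral>\<^sup>+ s. ennreal ((norm (G x s))\<^sup>2) \<partial>P) \<le> ennreal (rho * (norm (gradf x))\<^sup>2)"
    and M_prob: "prob_space M"
    and E_meas: "\<And>k. E k \<in> borel_measurable M"
    and xi_meas: "\<And>k. xi k \<in> measurable M P"
    and law: "\<And>k. distr M (borel \<Otimes>\<^sub>M P) (\<lambda>w. (E k w, xi k w))
                    = density lborel (exponential_density 1) \<Otimes>\<^sub>M P"
    and indep: "prob_space.indep_vars M (\<lambda>_. borel \<Otimes>\<^sub>M P) (\<lambda>k w. (E k w, xi k w)) UNIV"
    and gamma_pos: "0 < gamma" and gamma_le: "gamma \<le> 1 / (rho * L)"
    and gamma'_def: "gamma' = gamma + sqrt (gamma / (2 * rho))"
    and eta_def: "eta = sqrt (gamma / (2 * rho))"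
    and eta'_def: "eta' = mu * gamma / 2 - sqrt (gamma / (2 * rho))"
    and t_nonneg: "t \<ge> 0"
  shows "(\<integral>\<^sup>+ w. ennreal (f (fst (cn_process eta eta' gamma gamma' G x0
                                   (\<lambda>k. E k w) (\<lambda>k. xi k w) t)) - fstar) \<partial>M)
         \<le> ennreal (exp (- (mu * gamma / 2) * t) * (f x0 - fstar))"
proof -
  interpret accelerated_sgc P f gradf fstar L mu rho gamma gamma' eta eta' G
    by (intro accelerated_sgc.intro accelerated_sgc_axioms.intro P_prob) (fact+)
  interpret continuized_sampling P eta eta' gamma gamma' G M E xi
    by (intro continuized_sampling.intro continuized_sampling_axioms.intro is_continuized_process M_prob)
      (fact+)
  have "(\<integral>\<^sup>+ w. ennreal (f (fst (cn_process eta eta' gamma gamma' G x0 (\<lambda>k. E k w) (\<lambda>k. xi k w) t)) - fstar) \<partial>M)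
      \<le> (\<integral>\<^sup>+ w. ennreal (lyapunov (cn_process eta eta' gamma gamma' G x0 (\<lambda>k. E k w) (\<lambda>k. xi k w) t)) \<partial>M)"
    by (intro nn_integral_mono ennreal_leI) (simp add: lyapunov_def)
  also have "\<dots> \<le> ennreal (exp (- (mu * gamma / 2) * t) * lyapunov (x0, x0))"
    by (rule nn_integral_cn_process_le[OF first_jump_decay_lyapunov measurable_lyapunov lyapunov_nonneg t_nonneg])
  also have "lyapunov (x0, x0) = f x0 - fstar"
    by (simp add: lyapunov_def)
  finally show ?thesis .
qed

end
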